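(* Borda's rule (score vector $w_i=(m-i)/(m-1)$, $i=1,\dots,m$) is not dominated by any other $m$-candidate positional rule when $m\in\{3,4\}$, and is dominated by some other $m$-candidate positional rule (namely the $\lfloor m/2\rfloor$-approval rule, whose score vector has exactly $\lfloor m/2\rfloor$ ones followed by zeros) when $m\ge5$.
   Context: For an $m$-candidate positional rule with score vector $w=(w_1,\dots,w_m)$, $1=w_1\ge\cdots\ge w_m=0$, let $\bar w=\frac1m\sum_iw_i$, $\sigma_w^2=\frac1m\sum_iw_i^2-\bar w^2$, $M_w=\{(\lambda,\mu):0\le\lambda\le\mu,\ w_{i+1}\lambda+(1-w_i)\mu\le1,\ i=1,\dots,m-1\}$, and $V_w=\sup\{\lambda(\rho_1(Z)-\bar Z)+\mu(\bar Z-\rho_2(Z)):(\lambda,\mu)\in\sigma_w(\frac{m}{m-1})^{1/2}M_w\}\in[0,\infty]$, where $Z=(Z_1,\dots,Z_m)$ has independent standard normal entries, $\bar Z$ is their mean and $\rho_j(Z)$ the $j$-th largest entry. (Under Impartial Culture, $V_w$ is the limiting distribution of the minimum manipulating coalition size divided by $\sqrt n$.) Let $g_w(v)=\mathbb P(V_w\le v)$. A rule $w$ dominates a rule $w'$ if $g_w(v)\le g_{w'}(v)$ for all $v\ge0$. *)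

theory Defs
  imports "HOL-Probability.Probability"
begin

text \<open>Score vectors are functions nat => real, relevant on indices 1..m.\<close>

definition positional_rule :: "nat \<Rightarrow> (nat \<Rightarrow> real) \<Rightarrow> bool" where
  "positional_rule m w \<longleftrightarrow> w 1 = 1 \<and> w m = 0 \<and>
     (\<forall>i j. 1 \<le> i \<longrightarrow> i \<le> j \<longrightarrow> j \<le> m \<longrightarrow> w j \<le> w i)"

definition borda :: "nat \<Rightarrow> nat \<Rightarrow> real" where
  "borda m i = (real m - real i) / (real m - 1)"

definition approval :: "nat \<Rightarrow> nat \<Rightarrow> nat \<Rightarrow> real" where
  "approval m k i = (if i \<le> k then 1 else 0)"

definition wbar :: "nat \<Rightarrow> (nat \<Rightarrow> real) \<Rightarrow> real" where
  "wbar m w = (\<Sum>i=1..m. w i) / real m"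

definition sigma_w :: "nat \<Rightarrow> (nat \<Rightarrow> real) \<Rightarrow> real" where
  "sigma_w m w = sqrt ((\<Sum>i=1..m. (w i)\<^sup>2) / real m - (wbar m w)\<^sup>2)"

definition M_set :: "nat \<Rightarrow> (nat \<Rightarrow> real) \<Rightarrow> (real \<times> real) set" where
  "M_set m w = {(l, u). 0 \<le> l \<and> l \<le> u \<and>
      (\<forall>i\<in>{1..m-1}. w (i+1) * l + (1 - w i) * u \<le> 1)}"

definition zbar :: "nat \<Rightarrow> (nat \<Rightarrow> real) \<Rightarrow> real" where
  "zbar m z = (\<Sum>i=1..m. z i) / real m"

definition rho :: "nat \<Rightarrow> nat \<Rightarrow> (nat \<Rightarrow> real) \<Rightarrow> real" where
  "rho m j z = rev (sort (map z [1..<m+1])) ! (j - 1)"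

definition V_w :: "nat \<Rightarrow> (nat \<Rightarrow> real) \<Rightarrow> (nat \<Rightarrow> real) \<Rightarrow> ereal" where
  "V_w m w z = Sup {ereal (l * (rho m 1 z - zbar m z) + u * (zbar m z - rho m 2 z)) | l u.
      (l, u) \<in> (\<lambda>(a, b). (sigma_w m w * sqrt (real m / (real m - 1)) * a,
                          sigma_w m w * sqrt (real m / (real m - 1)) * b)) ` M_set m w}"

definition gauss_m :: "nat \<Rightarrow> (nat \<Rightarrow> real) measure" where
  "gauss_m m = PiM {1..m} (\<lambda>_. density lborel std_normal_density)"

definition g_w :: "nat \<Rightarrow> (nat \<Rightarrow> real) \<Rightarrow> real \<Rightarrow> real" where
  "g_w m w v = measure (gauss_m m) {z \<in> space (gauss_m m). V_w m w z \<le> ereal v}"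

definition dominates :: "nat \<Rightarrow> (nat \<Rightarrow> real) \<Rightarrow> (nat \<Rightarrow> real) \<Rightarrow> bool" where
  "dominates m w w' \<longleftrightarrow> (\<forall>v\<ge>0. g_w m w v \<le> g_w m w' v)"

end

theory Submission
  imports Defs "HOL-Library.Nat_Bijection"
begin

(*
  Put A = rho_1(Z) - Zbar >= 0 and X = rho_1(Z) - rho_2(Z) >= 0.  Since
  lambda (rho_1 - Zbar) + mu (Zbar - rho_2) = (lambda - mu) A + mu X with lambda <= mu on M_w,
  V_w depends only on (A, X).  For Borda the constraint i = m - 1 gives mu <= T = (m-1)/(m-2) and
  (T, T) lies in M_w, so V_Borda = c_B T X exactly, where c_w = sigma_w sqrt (m/(m-1)); for every
  rule (1, 1) lies in M_w, so V_w >= c_w X.  Hence w dominates Borda as soon as c_w >= c_B T,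
  which a variance computation confirms for the floor(m/2)-approval rule when m >= 5.

  Conversely, suppose some slack gamma = 1 + w_(i+1) - w_i satisfies c_w / gamma < c_B T.  On the
  event X <= gamma A one has V_w <= (c_w / gamma) X.  Take r < 1 with c_w / gamma <= r c_B T and s
  small: P(s < X <= s/r) is of order s, whereas X <= s/r < gamma A forces Z_1, Z_2, Z_3 to lie
  within O(s) of each other, which has probability O(s^2).  So g_w > g_Borda at v = c_B T s.
  For m = 3, 4 an explicit variance computation shows that every w other than Borda has such a slack.
*)

section \<open>Order statistics\<close>

lemma sorted_le_last: "sorted xs \<Longrightarrow> x \<in> set xs \<Longrightarrow> x \<le> last xs"
  by (induction xs rule: rev_induct) (auto simp: sorted_append)

lemma rho_top_two:
  assumes "m \<ge> 2"
  obtains i j where "i \<in> {1..m}" "j \<in> {1..m}" "i \<noteq> j" "z i = rho m 1 z" "z j = rho m 2 z"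
    "\<And>k. k \<in> {1..m} \<Longrightarrow> z k \<le> rho m 1 z"
    "\<And>k. k \<in> {1..m} \<Longrightarrow> k \<noteq> i \<Longrightarrow> z k \<le> rho m 2 z"
proof -
  define S where "S = sort (map z [1..<m+1])"
  have len: "length S = m" and sorted: "sorted S" by (simp_all add: S_def)
  have split: "S = butlast S @ [last S]"
    using len assms by (intro append_butlast_last_id[symmetric]) auto
  have ne: "butlast S \<noteq> []" using len assms by (simp flip: length_greater_0_conv)
  have rho_S: "rho m j z = rev S ! (j - 1)" for j by (simp add: rho_def S_def)
  have rev_S: "rev S = last S # rev (butlast S)" by (subst split) simp
  have rho1: "rho m 1 z = last S" unfolding rho_S rev_S by simp
  have rho2: "rho m 2 z = last (butlast S)"
    unfolding rho_S rev_S using ne by (simp add: hd_conv_nth[symmetric] hd_rev)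
  have "last S \<in> set S" using len assms by (intro last_in_set) auto
  moreover have set_S: "set S = z ` {1..m}"
    by (simp add: S_def atLeastLessThanSuc_atLeastAtMost del: upt_Suc)
  ultimately obtain i where i: "i \<in> {1..m}" "z i = last S" by (metis imageE)
  have "mset (butlast S) = mset S - {#z i#}" using i by (subst (2) split) simp
  also have "\<dots> = image_mset z (mset [1..<m+1]) - image_mset z {#i#}"
    by (simp add: S_def del: upt_Suc)
  also have "\<dots> = image_mset z (mset (remove1 i [1..<m+1]))"
    using i by (simp add: image_mset_Diff del: upt_Suc)
  finally have rest: "set (butlast S) = z ` ({1..m} - {i})"
    by (metis set_image_mset set_mset_mset set_remove1_eq distinct_upt set_upt
        atLeastLessThanSuc_atLeastAtMost Suc_eq_plus1)
  then obtain j where j: "j \<in> {1..m} - {i}" "z j = last (butlast S)"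
    using ne last_in_set by (metis imageE)
  have le1: "z k \<le> rho m 1 z" if "k \<in> {1..m}" for k
    unfolding rho1 using sorted that set_S by (intro sorted_le_last) auto
  have le2: "z k \<le> rho m 2 z" if "k \<in> {1..m}" "k \<noteq> i" for k
    unfolding rho2 using sorted_butlast[OF sorted] rest that by (intro sorted_le_last) auto
  show thesis
    using that[of i j] i j le1 le2 unfolding rho1 rho2 by blast
qed

lemma le_rho1: "m \<ge> 2 \<Longrightarrow> k \<in> {1..m} \<Longrightarrow> z k \<le> rho m 1 z"
  by (rule rho_top_two[of m z]) blast+

lemma rho_top_two_eq:
  assumes "m \<ge> 2" "z 2 < z 1" "\<And>k. k \<in> {3..m} \<Longrightarrow> z k < z 2"
  shows "rho m 1 z = z 1" "rho m 2 z = z 2"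
proof -
  obtain i j where ij: "i \<in> {1..m}" "j \<in> {1..m}" "i \<noteq> j" "z i = rho m 1 z" "z j = rho m 2 z"
    and le1: "\<And>k. k \<in> {1..m} \<Longrightarrow> z k \<le> rho m 1 z"
    and le2: "\<And>k. k \<in> {1..m} \<Longrightarrow> k \<noteq> i \<Longrightarrow> z k \<le> rho m 2 z"
    using rho_top_two[OF assms(1)] by blast
  have below_1: "z k < z 1" if "k \<in> {2..m}" for k
    using that assms(2) assms(3)[of k] by (cases "k = 2") auto
  have "i = 1"
    using below_1[of i] le1[of 1] ij assms(1) by (cases "i = 1") auto
  then show "rho m 1 z = z 1" using ij by simp
  have "z j \<le> z 2"
    using ij \<open>i = 1\<close> assms(3)[of j] by (cases "j = 2") auto
  then show "rho m 2 z = z 2"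
    using le2[of 2] ij \<open>i = 1\<close> assms(1) by fastforce
qed

lemma rho1_eq_Max:
  assumes "m \<ge> 2"
  shows "rho m 1 z = Max (z ` {1..m})"
proof -
  obtain i where "i \<in> {1..m}" "z i = rho m 1 z" using rho_top_two[OF assms] by metis
  then have "rho m 1 z \<in> z ` {1..m}" by (metis imageI)
  then show ?thesis using le_rho1[OF assms, of _ z] by (intro sym[OF Max_eqI]) auto
qed

lemma rho2_eq_Max_min:
  assumes "m \<ge> 2"
  shows "rho m 2 z = Max ((\<lambda>(i, j). min (z i) (z j)) ` {(i, j) \<in> {1..m} \<times> {1..m}. i \<noteq> j})"
proof -
  obtain i j where ij: "i \<in> {1..m}" "j \<in> {1..m}" "i \<noteq> j" "z i = rho m 1 z" "z j = rho m 2 z"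
    and le2: "\<And>k. k \<in> {1..m} \<Longrightarrow> k \<noteq> i \<Longrightarrow> z k \<le> rho m 2 z"
    using rho_top_two[OF assms] by metis
  define P where "P = {(i, j) \<in> {1..m} \<times> {1..m}. i \<noteq> j}"
  have "finite P" by (rule finite_subset[of _ "{1..m} \<times> {1..m}"]) (auto simp: P_def)
  moreover have "rho m 2 z = min (z i) (z j)" "(i, j) \<in> P"
    using ij le_rho1[OF assms ij(2), of z] by (simp_all add: min_def P_def)
  moreover have "min (z a) (z b) \<le> rho m 2 z" if "(a, b) \<in> P" for a b
    using that le2[of a] le2[of b] by (cases "a = i") (auto simp: P_def)
  ultimately show ?thesis
    unfolding P_def[symmetric] by (intro sym[OF Max_eqI]) auto
qed

definition top_gap :: "nat \<Rightarrow> (nat \<Rightarrow> real) \<Rightarrow> real" where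
  "top_gap m z = rho m 1 z - rho m 2 z"

definition top_excess :: "nat \<Rightarrow> (nat \<Rightarrow> real) \<Rightarrow> real" where
  "top_excess m z = rho m 1 z - zbar m z"

lemma top_gap_nonneg: "m \<ge> 2 \<Longrightarrow> 0 \<le> top_gap m z"
  unfolding top_gap_def by (rule rho_top_two[of m z]) force+

lemma top_excess_eq_mean:
  "m \<ge> 1 \<Longrightarrow> top_excess m z = (\<Sum>i=1..m. rho m 1 z - z i) / real m"
  by (simp add: top_excess_def zbar_def sum_subtractf field_simps)

lemma rho1_minus_le_top_excess:
  assumes "m \<ge> 2" "k \<in> {1..m}"
  shows "rho m 1 z - z k \<le> real m * top_excess m z"
proof -
  have "rho m 1 z - z k \<le> (\<Sum>i=1..m. rho m 1 z - z i)"
    using le_rho1[OF assms(1), of _ z] assms(2) by (intro member_le_sum) auto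
  then show ?thesis using assms(1) by (simp add: top_excess_eq_mean)
qed

lemma top_excess_nonneg:
  assumes "m \<ge> 2"
  shows "0 \<le> top_excess m z"
proof -
  have "0 \<le> (\<Sum>i=1..m. rho m 1 z - z i)"
    using le_rho1[OF assms, of _ z] by (intro sum_nonneg) auto
  then show ?thesis using assms by (simp add: top_excess_eq_mean)
qed

section \<open>Score variances\<close>

definition score_variance :: "nat \<Rightarrow> (nat \<Rightarrow> real) \<Rightarrow> real" where
  "score_variance m w = (\<Sum>i=1..m. (w i)\<^sup>2) / real m - (wbar m w)\<^sup>2"

(* The factor c_w = sigma_w sqrt (m / (m - 1)) by which M_w is scaled in V_w. *)
definition sigma_scaled :: "nat \<Rightarrow> (nat \<Rightarrow> real) \<Rightarrow> real" where
  "sigma_scaled m w = sigma_w m w * sqrt (real m / (real m - 1))"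

lemma score_variance_eq_mean_sq_dev:
  assumes "m \<ge> 1"
  shows "score_variance m w = (\<Sum>i=1..m. (w i - wbar m w)\<^sup>2) / real m"
proof -
  define \<mu> where "\<mu> = wbar m w"
  have sum_w: "(\<Sum>i=1..m. w i) = real m * \<mu>" using assms by (simp add: wbar_def \<mu>_def)
  have "(\<Sum>i=1..m. (w i - \<mu>)\<^sup>2) = (\<Sum>i=1..m. (w i)\<^sup>2) - 2 * \<mu> * (\<Sum>i=1..m. w i) + real m * \<mu>\<^sup>2"
    by (simp add: power2_diff sum.distrib sum_subtractf sum_distrib_left mult_ac)
  also have "\<dots> = (\<Sum>i=1..m. (w i)\<^sup>2) - real m * \<mu>\<^sup>2"
    unfolding sum_w by (simp add: power2_eq_square)
  finally show ?thesis
    using assms by (simp add: score_variance_def \<mu>_def[symmetric] diff_divide_distrib)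
qed

lemma score_variance_nonneg: "m \<ge> 1 \<Longrightarrow> 0 \<le> score_variance m w"
  by (simp add: score_variance_eq_mean_sq_dev sum_nonneg)

lemma sigma_scaled_eq: "sigma_scaled m w = sqrt (score_variance m w * (real m / (real m - 1)))"
  unfolding sigma_scaled_def sigma_w_def score_variance_def by (rule real_sqrt_mult[symmetric])

lemma sigma_scaled_nonneg: "m \<ge> 1 \<Longrightarrow> 0 \<le> sigma_scaled m w"
  by (simp add: sigma_scaled_eq score_variance_nonneg divide_nonneg_nonneg)

lemma positional_rule_antimono:
  "positional_rule m w \<Longrightarrow> 1 \<le> i \<Longrightarrow> i \<le> j \<Longrightarrow> j \<le> m \<Longrightarrow> w j \<le> w i"
  by (simp add: positional_rule_def)

lemma positional_rule_bounds:
  assumes "positional_rule m w" "k \<in> {1..m}"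
  shows "0 \<le> w k" "w k \<le> 1"
  using positional_rule_antimono[OF assms(1), of k m] positional_rule_antimono[OF assms(1), of 1 k]
    assms by (auto simp: positional_rule_def)

(* On the diagonal lambda = mu the i-th constraint of M_w reads score_slack w i * lambda <= 1. *)
definition score_slack :: "(nat \<Rightarrow> real) \<Rightarrow> nat \<Rightarrow> real" where
  "score_slack w i = 1 + w (i + 1) - w i"

lemma score_slack_nonneg:
  assumes "positional_rule m w" "i \<in> {1..m-1}"
  shows "0 \<le> score_slack w i"
proof -
  have "i \<in> {1..m}" "i + 1 \<in> {1..m}" using assms(2) by auto
  then show ?thesis
    using positional_rule_bounds[OF assms(1)] by (force simp: score_slack_def)
qed

lemma sum_borda_numerators: "(\<Sum>i=1..n. real n - real i) = real n * (real n - 1) / 2"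
proof (induction n)
  case (Suc n)
  have "(\<Sum>i=1..Suc n. real (Suc n) - real i) = (\<Sum>i=1..n. (real n - real i) + 1)"
    by (simp add: algebra_simps)
  also have "\<dots> = real n * (real n - 1) / 2 + real n" using Suc by (simp add: sum.distrib)
  finally show ?case by (simp add: field_simps)
qed simp

lemma sum_borda_numerators_sq:
  "(\<Sum>i=1..n. (real n - real i)\<^sup>2) = real n * (real n - 1) * (2 * real n - 1) / 6"
proof (induction n)
  case (Suc n)
  have "(\<Sum>i=1..Suc n. (real (Suc n) - real i)\<^sup>2) = (\<Sum>i=1..n. (real (Suc n) - real i)\<^sup>2)"
    by simp
  also have "\<dots> = (\<Sum>i=1..n. (real n - real i)\<^sup>2 + 2 * (real n - real i) + 1)"
    by (rule sum.cong) (auto simp: power2_eq_square algebra_simps)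
  also have "\<dots> = (\<Sum>i=1..n. (real n - real i)\<^sup>2) + 2 * (\<Sum>i=1..n. real n - real i) + real n"
    by (simp only: sum.distrib sum_distrib_left[symmetric]) simp
  also have "\<dots> = real n * (real n - 1) * (2 * real n - 1) / 6 + real n * (real n - 1) + real n"
    by (simp only: Suc.IH sum_borda_numerators)
  finally show ?case by (simp add: field_simps)
qed simp

lemma score_variance_borda:
  assumes "m \<ge> 2"
  shows "score_variance m (borda m) = (real m + 1) / (12 * (real m - 1))"
proof -
  have nz: "real m - 1 > 0" using assms by simp
  have "(\<Sum>i=1..m. borda m i) = (\<Sum>i=1..m. real m - real i) / (real m - 1)"
    unfolding borda_def by (rule sum_divide_distrib[symmetric])
  also have "\<dots> = real m / 2" unfolding sum_borda_numerators using nz by (simp add: field_simps)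
  finally have sum1: "(\<Sum>i=1..m. borda m i) = real m / 2" .
  have "(\<Sum>i=1..m. (borda m i)\<^sup>2) = (\<Sum>i=1..m. (real m - real i)\<^sup>2) / (real m - 1)\<^sup>2"
    unfolding borda_def power_divide by (rule sum_divide_distrib[symmetric])
  also have "\<dots> = real m * (2 * real m - 1) / (6 * (real m - 1))"
    unfolding sum_borda_numerators_sq using nz by (simp add: power2_eq_square)
  finally have sum2: "(\<Sum>i=1..m. (borda m i)\<^sup>2) = real m * (2 * real m - 1) / (6 * (real m - 1))" .
  show ?thesis
    unfolding score_variance_def wbar_def sum1 sum2 using nz by (simp add: field_simps power2_eq_square)
qed

lemma score_variance_approval:
  assumes "k \<le> m"
  shows "score_variance m (approval m k) = real k / real m - (real k / real m)\<^sup>2"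
proof -
  have "(\<Sum>i=1..m. approval m k i) = card {i \<in> {1..m}. i \<le> k}"
    unfolding approval_def by (subst sum.inter_filter[symmetric]) auto
  also have "{i \<in> {1..m}. i \<le> k} = {1..k}" using assms by auto
  finally have "(\<Sum>i=1..m. approval m k i) = real k" by simp
  moreover have "(approval m k i)\<^sup>2 = approval m k i" for i by (simp add: approval_def)
  ultimately show ?thesis by (simp add: score_variance_def wbar_def)
qed

lemma positional_rule_approval: "1 \<le> k \<Longrightarrow> k < m \<Longrightarrow> positional_rule m (approval m k)"
  by (auto simp: positional_rule_def approval_def)

section \<open>The functional V_w\<close>

lemma V_w_le_iff:
  "V_w m w z \<le> ereal t \<longleftrightarrow>
    (\<forall>(a, b) \<in> M_set m w. sigma_scaled m w * ((a - b) * top_excess m z + b * top_gap m z) \<le> t)"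
  unfolding V_w_def Sup_le_iff
  by (force simp: top_excess_def top_gap_def sigma_scaled_def algebra_simps)

lemma one_one_in_M_set:
  assumes "positional_rule m w"
  shows "(1, 1) \<in> M_set m w"
proof -
  have "w (i + 1) \<le> w i" if "i \<in> {1..m-1}" for i
    using that by (intro positional_rule_antimono[OF assms]) auto
  then show ?thesis by (simp add: M_set_def)
qed

lemma sigma_scaled_top_gap_le_V_w:
  assumes "positional_rule m w" "V_w m w z \<le> ereal t"
  shows "sigma_scaled m w * top_gap m z \<le> t"
  using assms one_one_in_M_set[OF assms(1)] unfolding V_w_le_iff by fastforce

definition borda_coeff :: "nat \<Rightarrow> real" where
  "borda_coeff m = sigma_scaled m (borda m) * ((real m - 1) / (real m - 2))"

lemma borda_M_set_bound:
  assumes "m \<ge> 3" "(a, b) \<in> M_set m (borda m)"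
  shows "b \<le> (real m - 1) / (real m - 2)"
proof -
  have "m - 1 \<in> {1..m-1}" using assms(1) by auto
  with assms(2) have "borda m (m - 1 + 1) * a + (1 - borda m (m - 1)) * b \<le> 1"
    unfolding M_set_def by blast
  moreover have "borda m (m - 1 + 1) = 0" "borda m (m - 1) = 1 / (real m - 1)"
    using assms(1) by (auto simp: borda_def of_nat_diff)
  ultimately have "(1 - 1 / (real m - 1)) * b \<le> 1" by simp
  moreover have "real m - 1 > 0" "real m - 2 > 0" using assms(1) by auto
  ultimately show ?thesis by (simp add: field_simps)
qed

lemma borda_diagonal_in_M_set:
  assumes "m \<ge> 3"
  shows "((real m - 1) / (real m - 2), (real m - 1) / (real m - 2)) \<in> M_set m (borda m)"
proof -
  have nz: "real m - 1 \<noteq> 0" using assms by simp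
  have "borda m (i + 1) = borda m i - 1 / (real m - 1)" for i
    by (simp add: borda_def diff_divide_distrib[symmetric] algebra_simps)
  then have "borda m (i + 1) + (1 - borda m i) = (real m - 2) / (real m - 1)" for i
    using nz by (simp add: field_simps)
  moreover have "(real m - 2) / (real m - 1) * ((real m - 1) / (real m - 2)) = 1"
    using assms by simp
  ultimately have "borda m (i + 1) * T + (1 - borda m i) * T = 1"
    if "T = (real m - 1) / (real m - 2)" for i T
    unfolding that distrib_right[symmetric] by metis
  then show ?thesis using assms by (simp add: M_set_def)
qed

lemma V_w_borda_le_iff:
  assumes "m \<ge> 3"
  shows "V_w m (borda m) z \<le> ereal t \<longleftrightarrow> borda_coeff m * top_gap m z \<le> t"
proof -
  define T where "T = (real m - 1) / (real m - 2)"
  define c where "c = sigma_scaled m (borda m)"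
  define A where "A = top_excess m z"
  define X where "X = top_gap m z"
  have c: "0 \<le> c" using assms by (simp add: c_def sigma_scaled_nonneg)
  have A: "0 \<le> A" and X: "0 \<le> X"
    using assms by (simp_all add: A_def X_def top_excess_nonneg top_gap_nonneg)
  have coeff: "borda_coeff m * X = c * (T * X)" by (simp add: borda_coeff_def c_def T_def)
  have bound: "c * ((a - b) * A + b * X) \<le> c * (T * X)" if "(a, b) \<in> M_set m (borda m)" for a b
  proof (rule mult_left_mono[OF _ c])
    have "a \<le> b" "b \<le> T"
      using that borda_M_set_bound[OF assms that] by (auto simp: M_set_def T_def)
    then have "(a - b) * A \<le> 0" "b * X \<le> T * X"
      using A X by (auto intro: mult_nonpos_nonneg mult_right_mono)
    then show "(a - b) * A + b * X \<le> T * X" by linarith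
  qed
  show ?thesis
    unfolding V_w_le_iff c_def[symmetric] A_def[symmetric] X_def[symmetric]
  proof
    assume "\<forall>(a, b)\<in>M_set m (borda m). c * ((a - b) * A + b * X) \<le> t"
    then have "c * ((T - T) * A + T * X) \<le> t"
      using borda_diagonal_in_M_set[OF assms] unfolding T_def by fast
    then show "borda_coeff m * X \<le> t" by (simp add: coeff)
  next
    assume "borda_coeff m * X \<le> t"
    then show "\<forall>(a, b)\<in>M_set m (borda m). c * ((a - b) * A + b * X) \<le> t"
      using bound by (auto simp: coeff intro: order_trans)
  qed
qed

lemma slack_region_bound:
  fixes \<alpha> \<beta> a b A X :: real
  assumes "0 \<le> \<alpha>" "\<alpha> \<le> 1" "0 \<le> \<beta>" "a \<le> b" "\<alpha> * a + \<beta> * b \<le> 1"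
    and "0 \<le> A" "0 \<le> X" "X \<le> (\<alpha> + \<beta>) * A"
  shows "(\<alpha> + \<beta>) * ((a - b) * A + b * X) \<le> X"
proof (cases "(\<alpha> + \<beta>) * b \<le> 1")
  case True
  have "(\<alpha> + \<beta>) * ((a - b) * A) \<le> 0"
    using assms by (intro mult_nonneg_nonpos mult_nonpos_nonneg) auto
  moreover have "((\<alpha> + \<beta>) * b) * X \<le> 1 * X" using True assms(7) by (rule mult_right_mono)
  ultimately show ?thesis by (simp add: algebra_simps)
next
  case False
  have gap: "((\<alpha> + \<beta>) * b - 1) * X \<le> ((\<alpha> + \<beta>) * b - 1) * ((\<alpha> + \<beta>) * A)"
    using False assms(8) by (intro mult_left_mono) auto
  have "(a - b) + ((\<alpha> + \<beta>) * b - 1) \<le> (1 - \<alpha>) * (a - b)"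
    using assms(5) by (simp add: algebra_simps)
  moreover have "(1 - \<alpha>) * (a - b) \<le> 0" using assms by (intro mult_nonneg_nonpos) auto
  ultimately have "((\<alpha> + \<beta>) * A) * ((a - b) + ((\<alpha> + \<beta>) * b - 1)) \<le> 0"
    using assms by (intro mult_nonneg_nonpos) auto
  with gap show ?thesis by (simp add: algebra_simps)
qed

lemma V_w_le_on_slack_region:
  assumes "m \<ge> 2" "positional_rule m w" "i \<in> {1..m-1}" "0 < score_slack w i"
    and "top_gap m z \<le> score_slack w i * top_excess m z"
  shows "V_w m w z \<le> ereal (sigma_scaled m w / score_slack w i * top_gap m z)"
proof -
  define A where "A = top_excess m z"
  define X where "X = top_gap m z"
  define \<gamma> where "\<gamma> = score_slack w i"
  have "i \<in> {1..m}" "i + 1 \<in> {1..m}" using assms(3) by auto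
  note bounds = positional_rule_bounds[OF assms(2) this(1)] positional_rule_bounds[OF assms(2) this(2)]
  have AX: "0 \<le> A" "0 \<le> X" "X \<le> (w (i + 1) + (1 - w i)) * A"
    using assms(1,5) by (simp_all add: A_def X_def top_excess_nonneg top_gap_nonneg score_slack_def algebra_simps)
  have "sigma_scaled m w * ((a - b) * A + b * X) \<le> sigma_scaled m w / \<gamma> * X"
    if "(a, b) \<in> M_set m w" for a b
  proof -
    have "a \<le> b" "w (i + 1) * a + (1 - w i) * b \<le> 1" using that assms(3) by (auto simp: M_set_def)
    then have "(w (i + 1) + (1 - w i)) * ((a - b) * A + b * X) \<le> X"
      using bounds AX by (intro slack_region_bound) auto
    then have "\<gamma> * ((a - b) * A + b * X) \<le> X"
      by (simp add: \<gamma>_def score_slack_def algebra_simps)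
    then have "(a - b) * A + b * X \<le> X / \<gamma>"
      using assms(4) by (simp add: \<gamma>_def le_divide_eq mult.commute)
    then have "sigma_scaled m w * ((a - b) * A + b * X) \<le> sigma_scaled m w * (X / \<gamma>)"
      using sigma_scaled_nonneg[of m w] assms(1) by (intro mult_left_mono) auto
    then show ?thesis by simp
  qed
  then show ?thesis unfolding V_w_le_iff A_def X_def \<gamma>_def by auto
qed

lemma borda_coeff_pos: "m \<ge> 3 \<Longrightarrow> 0 < borda_coeff m"
  by (simp add: borda_coeff_def sigma_scaled_eq score_variance_borda)

section \<open>Gaussian estimates\<close>

abbreviation std_normal :: "real measure" where
  "std_normal \<equiv> density lborel std_normal_density"

lemma prob_space_std_normal: "prob_space std_normal"
  by (rule prob_space_normal_density) simp

lemma prob_space_gauss_m: "prob_space (gauss_m m)"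
  unfolding gauss_m_def by (intro prob_space_PiM prob_space_std_normal)

lemma std_normal_density_le_1: "std_normal_density x \<le> 1"
proof -
  have "1 / sqrt (2 * pi) \<le> 1" using pi_gt3 by (simp add: divide_le_eq)
  then show ?thesis
    unfolding std_normal_density_def by (intro mult_le_one) auto
qed

lemma std_normal_density_ge:
  assumes "\<bar>x\<bar> \<le> 2"
  shows "std_normal_density 2 \<le> std_normal_density x"
proof -
  have "x\<^sup>2 \<le> 2\<^sup>2" using assms by (metis abs_le_square_iff abs_numeral)
  then show ?thesis unfolding std_normal_density_def by (intro mult_left_mono) auto
qed

lemma emeasure_std_normal_Ico:
  "emeasure std_normal {a..<b} = (\<integral>\<^sup>+ x. ennreal (std_normal_density x) * indicator {a..<b} x \<partial>lborel)"
  by (rule emeasure_density) auto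

lemma measure_std_normal_Ico_le:
  assumes "a \<le> b"
  shows "measure std_normal {a..<b} \<le> b - a"
proof -
  interpret prob_space std_normal by (rule prob_space_std_normal)
  have "emeasure std_normal {a..<b} \<le> (\<integral>\<^sup>+ x. indicator {a..<b} x \<partial>lborel)"
    unfolding emeasure_std_normal_Ico
    by (intro nn_integral_mono) (auto simp: std_normal_density_le_1 indicator_def)
  then show ?thesis using assms by (simp add: emeasure_eq_measure)
qed

lemma measure_std_normal_Ico_ge:
  assumes "-2 \<le> a" "a \<le> b" "b \<le> 2"
  shows "std_normal_density 2 * (b - a) \<le> measure std_normal {a..<b}"
proof -
  interpret prob_space std_normal by (rule prob_space_std_normal)
  have "(\<integral>\<^sup>+ x. ennreal (std_normal_density 2) * indicator {a..<b} x \<partial>lborel) \<le> emeasure std_normal {a..<b}"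
    unfolding emeasure_std_normal_Ico
    by (intro nn_integral_mono) (use assms in \<open>auto simp: std_normal_density_ge indicator_def\<close>)
  also have "(\<integral>\<^sup>+ x. ennreal (std_normal_density 2) * indicator {a..<b} x \<partial>lborel)
      = ennreal (std_normal_density 2) * ennreal (b - a)"
    using assms by (subst nn_integral_cmult_indicator) auto
  finally show ?thesis
    using assms by (simp add: emeasure_eq_measure ennreal_mult[symmetric])
qed

lemma measure_gauss_m_PiE:
  assumes "\<And>k. k \<in> {1..m} \<Longrightarrow> A k \<in> sets borel"
  shows "measure (gauss_m m) (PiE {1..m} A) = (\<Prod>k\<in>{1..m}. measure std_normal (A k))"
proof -
  interpret product_sigma_finite "\<lambda>_. std_normal"
    by (simp add: product_sigma_finite_def prob_space_imp_sigma_finite prob_space_std_normal)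
  interpret N: prob_space std_normal by (rule prob_space_std_normal)
  interpret G: prob_space "gauss_m m" by (rule prob_space_gauss_m)
  have "emeasure (gauss_m m) (PiE {1..m} A) = (\<Prod>k\<in>{1..m}. ennreal (measure std_normal (A k)))"
    unfolding gauss_m_def using assms by (subst emeasure_PiM) (auto simp: N.emeasure_eq_measure)
  then show ?thesis
    by (simp add: G.emeasure_eq_measure prod_nonneg prod_ennreal)
qed

lemma measurable_gauss_m_component:
  assumes "k \<in> {1..m}"
  shows "(\<lambda>z. z k) \<in> borel_measurable (gauss_m m)"
proof -
  have "(\<lambda>z. z k) \<in> measurable (gauss_m m) std_normal"
    unfolding gauss_m_def using assms by (rule measurable_component_singleton)
  then show ?thesis by (simp cong: measurable_cong_sets)
qed

lemma borel_measurable_top_gap_excess: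
  assumes "m \<ge> 2"
  shows "top_gap m \<in> borel_measurable (gauss_m m)" "top_excess m \<in> borel_measurable (gauss_m m)"
proof -
  have [measurable]: "(\<lambda>z. rho m 1 z) \<in> borel_measurable (gauss_m m)"
    unfolding rho1_eq_Max[OF assms]
    by (intro borel_measurable_Max) (auto intro: measurable_gauss_m_component)
  have "finite {(i, j) \<in> {1..m} \<times> {1..m}. i \<noteq> j}"
    by (rule finite_subset[of _ "{1..m} \<times> {1..m}"]) auto
  then have [measurable]: "(\<lambda>z. rho m 2 z) \<in> borel_measurable (gauss_m m)"
    unfolding rho2_eq_Max_min[OF assms]
    by (intro borel_measurable_Max) (auto intro!: borel_measurable_min measurable_gauss_m_component)
  have [measurable]: "(\<lambda>z. zbar m z) \<in> borel_measurable (gauss_m m)"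
    unfolding zbar_def by (intro borel_measurable_divide borel_measurable_sum)
      (auto intro: measurable_gauss_m_component)
  show "top_gap m \<in> borel_measurable (gauss_m m)" "top_excess m \<in> borel_measurable (gauss_m m)"
    unfolding top_gap_def[abs_def] top_excess_def[abs_def] by measurable
qed

lemma sets_gauss_m_V_w_le:
  assumes "m \<ge> 2"
  shows "{z \<in> space (gauss_m m). V_w m w z \<le> ereal v} \<in> sets (gauss_m m)"
proof -
  define K where "K = (\<Inter>q \<in> M_set m w.
      {p :: real \<times> real. sigma_scaled m w * ((fst q - snd q) * fst p + snd q * snd p) \<le> v})"
  have "closed K" unfolding K_def
    by (intro closed_INT ballI closed_Collect_le continuous_intros)
  moreover have "(\<lambda>z. (top_excess m z, top_gap m z)) \<in> borel_measurable (gauss_m m)"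
    using borel_measurable_top_gap_excess[OF assms] by (intro borel_measurable_Pair) auto
  ultimately have "(\<lambda>z. (top_excess m z, top_gap m z)) -` K \<inter> space (gauss_m m) \<in> sets (gauss_m m)"
    by (blast intro: measurable_sets borel_closed)
  moreover have "(\<lambda>z. (top_excess m z, top_gap m z)) -` K \<inter> space (gauss_m m)
      = {z \<in> space (gauss_m m). V_w m w z \<le> ereal v}"
    unfolding K_def V_w_le_iff by fastforce
  ultimately show ?thesis by simp
qed

(* On a window box s < top_gap <= s + 3h, and its measure is of order h^2; about 1/h disjoint
   translates along the diagonal fit into [0, 1], so P(s < top_gap <= s + 3h) is of order h. *)
definition window_box :: "nat \<Rightarrow> real \<Rightarrow> real \<Rightarrow> real \<Rightarrow> (nat \<Rightarrow> real) set" where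
  "window_box m s h t = PiE {1..m} (\<lambda>k. if k = 1 then {t..<t + h}
      else if k = 2 then {t - s - 2 * h..<t - s - h} else {-2..<-1})"

lemma sets_window_box: "window_box m s h t \<in> sets (gauss_m m)"
  unfolding window_box_def gauss_m_def by (rule sets_PiM_I_finite) auto

lemma top_gap_on_window_box:
  assumes "m \<ge> 3" "0 < s" "0 < h" "s + 3 * h \<le> 1/2" "0 \<le> t" "z \<in> window_box m s h t"
  shows "s < top_gap m z \<and> top_gap m z \<le> s + 3 * h"
proof -
  have mem: "z k \<in> (if k = 1 then {t..<t + h} else if k = 2 then {t - s - 2 * h..<t - s - h} else {-2..<-1})"
    if "k \<in> {1..m}" for k
    using PiE_mem[OF assms(6)[unfolded window_box_def] that] .
  have z1: "t \<le> z 1" "z 1 < t + h" and z2: "t - s - 2 * h \<le> z 2" "z 2 < t - s - h"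
    using mem[of 1] mem[of 2] assms(1) by auto
  have "z k < z 2" if "k \<in> {3..m}" for k
    using mem[of k] that z2 assms(2-5) by auto
  moreover have "z 2 < z 1" using z1 z2 assms(2,3) by linarith
  ultimately have "top_gap m z = z 1 - z 2"
    using rho_top_two_eq[of m z] assms(1) by (simp add: top_gap_def)
  then show ?thesis using z1 z2 by simp
qed

lemma measure_window_box_ge:
  assumes "m \<ge> 3" "0 < s" "0 < h" "s + 3 * h \<le> 1/2" "0 \<le> t" "t + h \<le> 1"
  shows "std_normal_density 2 ^ m * h\<^sup>2 \<le> measure (gauss_m m) (window_box m s h t)"
proof -
  define p where "p = std_normal_density 2"
  define I where "I k = (if k = 1 then {t..<t + h} else if k = 2 then {t - s - 2 * h..<t - s - h}
      else {-2..<-1::real})" for k :: nat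
  define g where "g k = (if k = 1 \<or> k = 2 then p * h else p)" for k :: nat
  have "0 < p" by (simp add: p_def std_normal_density_def)
  have "g k \<le> measure std_normal (I k)" for k
    using measure_std_normal_Ico_ge[of t "t + h"] measure_std_normal_Ico_ge[of "t - s - 2 * h" "t - s - h"]
      measure_std_normal_Ico_ge[of "-2" "-1"] assms
    by (auto simp: g_def I_def p_def)
  then have "(\<Prod>k\<in>{1..m}. g k) \<le> (\<Prod>k\<in>{1..m}. measure std_normal (I k))"
    using \<open>0 < p\<close> assms(3) by (intro prod_mono) (auto simp: g_def)
  also have "\<dots> = measure (gauss_m m) (window_box m s h t)"
    unfolding window_box_def I_def[symmetric] by (rule measure_gauss_m_PiE[symmetric]) (simp add: I_def)
  finally have le: "(\<Prod>k\<in>{1..m}. g k) \<le> measure (gauss_m m) (window_box m s h t)" .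
  have "{1..m} = insert 1 (insert 2 {3..m})" using assms(1) by auto
  then have "(\<Prod>k\<in>{1..m}. g k) = (p * h) * (p * h) * p ^ (m - 2)"
    by (simp add: g_def)
  also have "\<dots> = p ^ (m - 2 + 2) * h\<^sup>2"
    by (simp only: power_add) (simp add: power2_eq_square)
  also have "m - 2 + 2 = m" using assms(1) by simp
  finally show ?thesis using le by (simp add: p_def)
qed

lemma disjoint_window_boxes:
  assumes "m \<ge> 1" "0 < h"
  shows "disjoint_family_on (\<lambda>j. window_box m s h (real j * h)) A"
  unfolding disjoint_family_on_def
proof (intro ballI impI, rule ccontr)
  fix i j assume "i \<noteq> j" "window_box m s h (real i * h) \<inter> window_box m s h (real j * h) \<noteq> {}"
  then obtain z where z: "z \<in> window_box m s h (real i * h)" "z \<in> window_box m s h (real j * h)"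
    by blast
  have "1 \<in> {1..m}" using assms(1) by simp
  from PiE_mem[OF z(1)[unfolded window_box_def] this] PiE_mem[OF z(2)[unfolded window_box_def] this]
  have "real i * h \<le> z 1" "z 1 < real i * h + h" "real j * h \<le> z 1" "z 1 < real j * h + h"
    by auto
  then have "real i * h < (real j + 1) * h" "real j * h < (real i + 1) * h"
    by (simp_all add: algebra_simps)
  then have "real i < real j + 1" "real j < real i + 1"
    using assms(2) by simp_all
  with \<open>i \<noteq> j\<close> show False by linarith
qed

lemma measure_top_gap_window_ge:
  assumes "m \<ge> 3" "0 < s" "0 < \<delta>" "s + \<delta> \<le> 1/2"
  shows "std_normal_density 2 ^ m * \<delta> / 6 \<le> \<P>(z in gauss_m m. s < top_gap m z \<and> top_gap m z \<le> s + \<delta>)"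
proof -
  interpret prob_space "gauss_m m" by (rule prob_space_gauss_m)
  have "m \<ge> 2" using assms(1) by simp
  note [measurable] = borel_measurable_top_gap_excess[OF this]
  define p where "p = std_normal_density 2 ^ m"
  define h where "h = \<delta> / 3"
  define n where "n = nat \<lfloor>1 / h\<rfloor>"
  define B where "B j = window_box m s h (real j * h)" for j
  have h: "0 < h" "h \<le> 1/6" using assms by (auto simp: h_def)
  have "real n \<le> 1 / h" "1 / h - 1 \<le> real n" using h by (auto simp: n_def of_nat_nat)
  then have n: "real n * h \<le> 1" "1 - h \<le> real n * h"
    using h by (auto simp: field_simps)
  have "p * h\<^sup>2 \<le> measure (gauss_m m) (B j)" if "j < n" for j
  proof -
    have "(real j + 1) * h \<le> real n * h"
      using that h by (intro mult_right_mono) auto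
    then have "real j * h + h \<le> real n * h" by (simp add: algebra_simps)
    then show ?thesis unfolding B_def p_def
      using n h assms by (intro measure_window_box_ge) (auto simp: h_def)
  qed
  then have "real n * (p * h\<^sup>2) \<le> (\<Sum>j<n. measure (gauss_m m) (B j))"
    using sum_mono[of "{..<n}" "\<lambda>_. p * h\<^sup>2"] by simp
  also have "\<dots> = measure (gauss_m m) (\<Union>j<n. B j)"
    using disjoint_window_boxes[of m h] assms h
    by (intro finite_measure_finite_Union[symmetric]) (auto simp: B_def sets_window_box)
  also have "\<dots> \<le> \<P>(z in gauss_m m. s < top_gap m z \<and> top_gap m z \<le> s + \<delta>)"
  proof (rule finite_measure_mono)
    show "(\<Union>j<n. B j) \<subseteq> {z \<in> space (gauss_m m). s < top_gap m z \<and> top_gap m z \<le> s + \<delta>}"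
    proof
      fix z assume "z \<in> (\<Union>j<n. B j)"
      then obtain j where z: "z \<in> window_box m s h (real j * h)" by (auto simp: B_def)
      then have "s < top_gap m z \<and> top_gap m z \<le> s + 3 * h"
        using assms h by (intro top_gap_on_window_box) (auto simp: h_def)
      moreover have "z \<in> space (gauss_m m)" using sets.sets_into_space[OF sets_window_box] z by blast
      ultimately show "z \<in> {z \<in> space (gauss_m m). s < top_gap m z \<and> top_gap m z \<le> s + \<delta>}"
        by (simp add: h_def)
    qed
    show "{z \<in> space (gauss_m m). s < top_gap m z \<and> top_gap m z \<le> s + \<delta>} \<in> events"
      by measurable
  qed
  finally have "real n * h * (p * h) \<le> \<P>(z in gauss_m m. s < top_gap m z \<and> top_gap m z \<le> s + \<delta>)"
    by (simp add: power2_eq_square mult_ac)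
  moreover have "p * \<delta> / 6 = 1/2 * (p * h)" by (simp add: h_def)
  moreover have "1/2 * (p * h) \<le> real n * h * (p * h)"
    using n h by (intro mult_right_mono) (auto simp: p_def std_normal_density_def)
  ultimately show ?thesis unfolding p_def by linarith
qed

(* Z_1 lies in the j-th interval of length eta and Z_2, Z_3 within eta of it; summing over all
   integers j (enumerated by int_decode) bounds the probability that Z_1, Z_2, Z_3 are close. *)
definition close_box :: "nat \<Rightarrow> real \<Rightarrow> int \<Rightarrow> (nat \<Rightarrow> real) set" where
  "close_box m \<eta> j = PiE {1..m} (\<lambda>k. if k = 1 then {of_int j * \<eta>..<(of_int j + 1) * \<eta>}
      else if k = 2 \<or> k = 3 then {(of_int j - 1) * \<eta>..<(of_int j + 2) * \<eta>} else UNIV)"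

lemma sets_close_box: "close_box m \<eta> j \<in> sets (gauss_m m)"
  unfolding close_box_def gauss_m_def by (rule sets_PiM_I_finite) auto

lemma close_box_cover:
  assumes "0 < \<eta>" "z \<in> space (gauss_m m)" "\<bar>z 2 - z 1\<bar> < \<eta>" "\<bar>z 3 - z 1\<bar> < \<eta>"
  shows "z \<in> close_box m \<eta> \<lfloor>z 1 / \<eta>\<rfloor>"
proof -
  define j where "j = \<lfloor>z 1 / \<eta>\<rfloor>"
  have "of_int j * \<eta> \<le> z 1" "z 1 < of_int j * \<eta> + \<eta>"
    using assms(1) floor_divide_lower[of \<eta> "z 1"] floor_divide_upper[of \<eta> "z 1"]
    by (simp_all add: j_def algebra_simps)
  then show ?thesis
    using assms(2-4) unfolding j_def[symmetric]
    by (auto simp: close_box_def gauss_m_def space_PiM PiE_iff abs_less_iff algebra_simps)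
qed

lemma measure_close_box_le:
  assumes "m \<ge> 3" "0 < \<eta>"
  shows "measure (gauss_m m) (close_box m \<eta> j)
    \<le> 9 * \<eta>\<^sup>2 * measure std_normal {of_int j * \<eta>..<(of_int j + 1) * \<eta>}"
proof -
  interpret N: prob_space std_normal by (rule prob_space_std_normal)
  define I where "I = {of_int j * \<eta>..<(of_int j + 1) * \<eta>}"
  define J where "J = {(of_int j - 1) * \<eta>..<(of_int j + 2) * \<eta>}"
  have "{1..m} = insert 1 (insert 2 (insert 3 {4..m}))" using assms(1) by auto
  then have "measure (gauss_m m) (close_box m \<eta> j) = measure std_normal I * measure std_normal J * measure std_normal J"
    unfolding close_box_def I_def[symmetric] J_def[symmetric]
    using N.prob_space by (subst measure_gauss_m_PiE) (auto simp: I_def J_def)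
  also have "\<dots> \<le> measure std_normal I * (3 * \<eta>) * (3 * \<eta>)"
  proof -
    have "measure std_normal J \<le> 3 * \<eta>"
      using measure_std_normal_Ico_le[of "(of_int j - 1) * \<eta>" "(of_int j + 2) * \<eta>"] assms(2)
      by (simp add: J_def algebra_simps)
    then show ?thesis using assms(2) by (intro mult_mono) auto
  qed
  finally show ?thesis by (simp add: I_def power2_eq_square mult_ac)
qed

lemma disjoint_family_int_intervals:
  fixes \<eta> :: real
  assumes "0 < \<eta>"
  shows "disjoint_family (\<lambda>n. {of_int (int_decode n) * \<eta>..<(of_int (int_decode n) + 1) * \<eta>})"
proof -
  have "int_decode n = \<lfloor>x / \<eta>\<rfloor>"
    if "x \<in> {of_int (int_decode n) * \<eta>..<(of_int (int_decode n) + 1) * \<eta>}" for x n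
    using that assms
    by (intro floor_unique[symmetric]) (simp_all add: pos_le_divide_eq pos_divide_less_eq)
  then show ?thesis
    unfolding disjoint_family_on_def by (metis disjoint_iff inj_int_decode inj_eq)
qed

lemma measure_three_close_le:
  assumes "m \<ge> 3" "0 < \<eta>"
  shows "\<P>(z in gauss_m m. \<bar>z 2 - z 1\<bar> < \<eta> \<and> \<bar>z 3 - z 1\<bar> < \<eta>) \<le> 9 * \<eta>\<^sup>2"
proof -
  interpret G: prob_space "gauss_m m" by (rule prob_space_gauss_m)
  interpret N: prob_space std_normal by (rule prob_space_std_normal)
  define I where "I n = {of_int (int_decode n) * \<eta>..<(of_int (int_decode n) + 1) * \<eta>}" for n
  define B where "B n = close_box m \<eta> (int_decode n)" for n
  have disj: "disjoint_family I"
    unfolding I_def using assms(2) by (rule disjoint_family_int_intervals)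
  have "(\<lambda>n. measure std_normal (I n)) sums measure std_normal (\<Union>n. I n)"
    by (intro N.finite_measure_UNION disj) (auto simp: I_def)
  then have sum_I: "summable (\<lambda>n. measure std_normal (I n))" "(\<Sum>n. measure std_normal (I n)) \<le> 1"
    by (auto simp: sums_iff)
  have B_le: "measure (gauss_m m) (B n) \<le> 9 * \<eta>\<^sup>2 * measure std_normal (I n)" for n
    unfolding B_def I_def using assms by (rule measure_close_box_le)
  have sum_B: "summable (\<lambda>n. measure (gauss_m m) (B n))"
    using B_le sum_I by (intro summable_comparison_test[OF _ summable_mult[OF sum_I(1)]]) auto
  have "{z \<in> space (gauss_m m). \<bar>z 2 - z 1\<bar> < \<eta> \<and> \<bar>z 3 - z 1\<bar> < \<eta>} \<subseteq> (\<Union>n. B n)"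
  proof
    fix z assume "z \<in> {z \<in> space (gauss_m m). \<bar>z 2 - z 1\<bar> < \<eta> \<and> \<bar>z 3 - z 1\<bar> < \<eta>}"
    then have "z \<in> B (int_encode \<lfloor>z 1 / \<eta>\<rfloor>)"
      using close_box_cover[OF assms(2)] by (simp add: B_def)
    then show "z \<in> (\<Union>n. B n)" by blast
  qed
  then have "\<P>(z in gauss_m m. \<bar>z 2 - z 1\<bar> < \<eta> \<and> \<bar>z 3 - z 1\<bar> < \<eta>) \<le> measure (gauss_m m) (\<Union>n. B n)"
    by (intro G.finite_measure_mono) (auto simp: B_def sets_close_box)
  also have "\<dots> \<le> (\<Sum>n. measure (gauss_m m) (B n))"
    using sum_B by (intro G.finite_measure_subadditive_countably) (auto simp: B_def sets_close_box)
  also have "\<dots> \<le> (\<Sum>n. 9 * \<eta>\<^sup>2 * measure std_normal (I n))"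
    using B_le sum_B sum_I by (intro suminf_le summable_mult) auto
  also have "\<dots> \<le> 9 * \<eta>\<^sup>2"
    using sum_I by (simp add: suminf_mult mult_left_le)
  finally show ?thesis .
qed

lemma top_three_close_of_small_excess:
  assumes "m \<ge> 3" "real m * top_excess m z < \<eta>"
  shows "\<bar>z 2 - z 1\<bar> < \<eta> \<and> \<bar>z 3 - z 1\<bar> < \<eta>"
proof -
  have "rho m 1 z - \<eta> < z k \<and> z k \<le> rho m 1 z" if "k \<in> {1..m}" for k
    using rho1_minus_le_top_excess[of m k z] le_rho1[of m k z] assms that by auto
  from this[of 1] this[of 2] this[of 3] assms(1) show ?thesis by auto
qed

lemma top_gap_le_or_top_three_close:
  assumes "m \<ge> 3" "0 < \<gamma>" "top_gap m z \<le> x"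
  shows "top_gap m z \<le> \<gamma> * top_excess m z
    \<or> \<bar>z 2 - z 1\<bar> < real m * x / \<gamma> \<and> \<bar>z 3 - z 1\<bar> < real m * x / \<gamma>"
proof (cases "top_gap m z \<le> \<gamma> * top_excess m z")
  case False
  then have "\<gamma> * top_excess m z < x" using assms(3) by linarith
  then have "top_excess m z < x / \<gamma>"
    by (subst pos_less_divide_eq[OF assms(2)]) (simp add: mult.commute)
  then have "real m * top_excess m z < real m * (x / \<gamma>)"
    using assms(1) by (intro mult_strict_left_mono) auto
  then show ?thesis
    using top_three_close_of_small_excess[OF assms(1)] by simp
qed simp

lemma sets_gauss_m_three_close:
  assumes "m \<ge> 3"
  shows "{z \<in> space (gauss_m m). \<bar>z 2 - z 1\<bar> < \<eta> \<and> \<bar>z 3 - z 1\<bar> < \<eta>} \<in> sets (gauss_m m)"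
proof -
  have close: "{z \<in> space (gauss_m m). \<bar>z j - z 1\<bar> < \<eta>} \<in> sets (gauss_m m)" if "j \<in> {1..m}" for j
    using that assms by (intro borel_measurable_less borel_measurable_abs borel_measurable_diff
        borel_measurable_const measurable_gauss_m_component) auto
  have "{z \<in> space (gauss_m m). \<bar>z 2 - z 1\<bar> < \<eta> \<and> \<bar>z 3 - z 1\<bar> < \<eta>}
      = {z \<in> space (gauss_m m). \<bar>z 2 - z 1\<bar> < \<eta>} \<inter> {z \<in> space (gauss_m m). \<bar>z 3 - z 1\<bar> < \<eta>}"
    by auto
  then show ?thesis using close[of 2] close[of 3] assms by auto
qed

lemma sets_gauss_m_top_gap_le_excess:
  assumes "m \<ge> 2"
  shows "{z \<in> space (gauss_m m). top_gap m z \<le> x \<and> top_gap m z \<le> \<gamma> * top_excess m z} \<in> sets (gauss_m m)"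
proof -
  have "{z \<in> space (gauss_m m). top_gap m z \<le> x \<and> top_gap m z \<le> \<gamma> * top_excess m z}
      = {z \<in> space (gauss_m m). top_gap m z \<le> x} \<inter> {z \<in> space (gauss_m m). top_gap m z \<le> \<gamma> * top_excess m z}"
    by auto
  then show ?thesis
    using borel_measurable_top_gap_excess[OF assms]
    by (auto intro!: sets.Int borel_measurable_le borel_measurable_times borel_measurable_const)
qed

lemma measure_top_gap_gain:
  assumes "m \<ge> 3" "1/2 \<le> r" "r < 1" "0 < \<gamma>" "0 < s" "s \<le> 1/4"
  shows "\<P>(z in gauss_m m. top_gap m z \<le> s) + std_normal_density 2 ^ m * ((1 / r - 1) * s) / 6
    \<le> \<P>(z in gauss_m m. top_gap m z \<le> s / r \<and> top_gap m z \<le> \<gamma> * top_excess m z)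
      + 9 * (real m * (s / r) / \<gamma>)\<^sup>2"
proof -
  interpret prob_space "gauss_m m" by (rule prob_space_gauss_m)
  have "m \<ge> 2" using assms(1) by simp
  note X_A = borel_measurable_top_gap_excess[OF this]
  define \<delta> where "\<delta> = (1 / r - 1) * s"
  define \<eta> where "\<eta> = real m * (s / r) / \<gamma>"
  define E1 where "E1 = {z \<in> space (gauss_m m). top_gap m z \<le> s}"
  define E2 where "E2 = {z \<in> space (gauss_m m). s < top_gap m z \<and> top_gap m z \<le> s + \<delta>}"
  define E where "E = {z \<in> space (gauss_m m). top_gap m z \<le> s / r \<and> top_gap m z \<le> \<gamma> * top_excess m z}"
  define Q where "Q = {z \<in> space (gauss_m m). \<bar>z 2 - z 1\<bar> < \<eta> \<and> \<bar>z 3 - z 1\<bar> < \<eta>}"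
  have s_\<delta>: "s + \<delta> = s / r" "0 < \<delta>" "s / r \<le> 1/2"
    using assms by (auto simp: \<delta>_def field_simps)
  have "E1 \<in> events" "E2 \<in> events"
    using X_A unfolding E1_def E2_def by measurable
  moreover have "E \<in> events"
    unfolding E_def using \<open>m \<ge> 2\<close> by (rule sets_gauss_m_top_gap_le_excess)
  moreover have "Q \<in> events"
    unfolding Q_def using assms(1) by (rule sets_gauss_m_three_close)
  ultimately have events: "E1 \<in> events" "E2 \<in> events" "E \<in> events" "Q \<in> events" by blast+
  have cover: "E1 \<union> E2 \<subseteq> E \<union> Q"
  proof
    fix z assume z: "z \<in> E1 \<union> E2"
    then have "top_gap m z \<le> s / r" using s_\<delta> assms by (auto simp: E1_def E2_def)
    then have "top_gap m z \<le> \<gamma> * top_excess m z \<or> \<bar>z 2 - z 1\<bar> < \<eta> \<and> \<bar>z 3 - z 1\<bar> < \<eta>"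
      unfolding \<eta>_def by (rule top_gap_le_or_top_three_close[OF assms(1,4)])
    then show "z \<in> E \<union> Q"
      using z \<open>top_gap m z \<le> s / r\<close> by (auto simp: E_def Q_def E1_def E2_def)
  qed
  have "E1 \<inter> E2 = {}" by (auto simp: E1_def E2_def)
  then have "measure (gauss_m m) E1 + measure (gauss_m m) E2 = measure (gauss_m m) (E1 \<union> E2)"
    using events by (intro finite_measure_Union[symmetric]) auto
  also have "\<dots> \<le> measure (gauss_m m) (E \<union> Q)"
    using cover events by (intro finite_measure_mono) auto
  also have "\<dots> \<le> measure (gauss_m m) E + measure (gauss_m m) Q"
    using events by (intro measure_Un_le) auto
  finally have "measure (gauss_m m) E1 + measure (gauss_m m) E2 \<le> measure (gauss_m m) E + measure (gauss_m m) Q" .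
  moreover have "std_normal_density 2 ^ m * \<delta> / 6 \<le> measure (gauss_m m) E2"
    unfolding E2_def using assms s_\<delta> by (intro measure_top_gap_window_ge) auto
  moreover have "measure (gauss_m m) Q \<le> 9 * \<eta>\<^sup>2"
    unfolding Q_def using assms by (intro measure_three_close_le) (auto simp: \<eta>_def)
  ultimately show ?thesis
    unfolding E1_def E_def \<delta>_def \<eta>_def by linarith
qed

lemma exists_small_quadratic_lt_linear:
  fixes K L :: real
  assumes "0 < K" "0 < L"
  shows "\<exists>s. 0 < s \<and> s \<le> 1/4 \<and> K * s\<^sup>2 < L * s"
proof -
  define s where "s = min (1/4) (L / (2 * K))"
  have s: "0 < s" "s \<le> 1/4" using assms by (auto simp: s_def)
  have "K * s \<le> K * (L / (2 * K))" using assms by (intro mult_left_mono) (auto simp: s_def)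
  then have "K * s * s \<le> L / 2 * s" using assms s by (intro mult_right_mono) auto
  then have "K * s\<^sup>2 < L * s" using assms s by (simp add: power2_eq_square)
  with s show ?thesis by blast
qed

lemma exists_top_gap_level_gain:
  assumes "m \<ge> 3" "1/2 \<le> r" "r < 1" "0 < \<gamma>"
  shows "\<exists>s>0. \<P>(z in gauss_m m. top_gap m z \<le> s)
    < \<P>(z in gauss_m m. top_gap m z \<le> s / r \<and> top_gap m z \<le> \<gamma> * top_excess m z)"
proof -
  define L where "L = std_normal_density 2 ^ m * (1 / r - 1) / 6"
  define K where "K = 9 * (real m / (r * \<gamma>))\<^sup>2"
  have "0 < L" "0 < K" using assms by (auto simp: L_def K_def std_normal_density_def)
  then obtain s where s: "0 < s" "s \<le> 1/4" "K * s\<^sup>2 < L * s"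
    using exists_small_quadratic_lt_linear by blast
  have "9 * (real m * (s / r) / \<gamma>)\<^sup>2 = K * s\<^sup>2"
    by (simp add: K_def power_divide power_mult_distrib)
  moreover have "std_normal_density 2 ^ m * ((1 / r - 1) * s) / 6 = L * s"
    by (simp add: L_def)
  ultimately have "\<P>(z in gauss_m m. top_gap m z \<le> s)
      < \<P>(z in gauss_m m. top_gap m z \<le> s / r \<and> top_gap m z \<le> \<gamma> * top_excess m z)"
    using measure_top_gap_gain[OF assms s(1,2)] s(3) by linarith
  then show ?thesis using s(1) by blast
qed

section \<open>Comparison with Borda\<close>

lemma sigma_scaled_sq:
  "m \<ge> 1 \<Longrightarrow> (sigma_scaled m w)\<^sup>2 = score_variance m w * (real m / (real m - 1))"
  by (simp add: sigma_scaled_eq score_variance_nonneg)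

lemma borda_coeff_sq:
  assumes "m \<ge> 3"
  shows "(borda_coeff m)\<^sup>2
    = score_variance m (borda m) * ((real m - 1) / (real m - 2))\<^sup>2 * (real m / (real m - 1))"
proof -
  have "(borda_coeff m)\<^sup>2 = (sigma_scaled m (borda m))\<^sup>2 * ((real m - 1) / (real m - 2))\<^sup>2"
    by (simp only: borda_coeff_def power_mult_distrib)
  then show ?thesis using assms by (simp only: sigma_scaled_sq) (simp add: mult_ac)
qed

lemma sigma_scaled_div_lt_borda_coeff:
  assumes "m \<ge> 3" "0 < \<gamma>"
    and "score_variance m w < score_variance m (borda m) * ((real m - 1) / (real m - 2))\<^sup>2 * \<gamma>\<^sup>2"
  shows "sigma_scaled m w / \<gamma> < borda_coeff m"
proof -
  have "score_variance m w * (real m / (real m - 1))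
      < (score_variance m (borda m) * ((real m - 1) / (real m - 2))\<^sup>2 * \<gamma>\<^sup>2) * (real m / (real m - 1))"
    using assms by (intro mult_strict_right_mono) auto
  then have "(sigma_scaled m w)\<^sup>2 < (\<gamma> * borda_coeff m)\<^sup>2"
    using assms by (simp only: sigma_scaled_sq borda_coeff_sq power_mult_distrib) (auto simp: mult_ac)
  then have "sigma_scaled m w < \<gamma> * borda_coeff m"
    by (rule power_less_imp_less_base) (use assms borda_coeff_pos[OF assms(1)] in simp)
  then show ?thesis using assms(2) by (simp add: divide_less_eq mult.commute)
qed

lemma borda_variance_slope_le_half_approval_variance:
  fixes k m :: nat and x :: real
  assumes "m \<ge> 5" "k = m div 2" "x = real m"
  shows "(x + 1) / (12 * (x - 1)) * ((x - 1) / (x - 2))\<^sup>2 \<le> real k / x - (real k / x)\<^sup>2"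
proof -
  have x: "x \<ge> 5" using assms by simp
  have "4 * real k * (x - real k) \<ge> x\<^sup>2 - 1"
    using assms by (cases "even m") (auto elim!: evenE oddE simp: power2_eq_square algebra_simps)
  moreover have "0 \<le> (x - 5) * (x - 1)" using x by simp
  then have "x\<^sup>2 \<le> 3 * (x - 2)\<^sup>2" by (simp add: power2_eq_square algebra_simps)
  ultimately have "x\<^sup>2 * (x\<^sup>2 - 1) \<le> 3 * (x - 2)\<^sup>2 * (4 * real k * (x - real k))"
    using x by (intro mult_mono) auto
  then have "x\<^sup>2 * (x\<^sup>2 - 1) \<le> 12 * (real k * (x - real k) * (x - 2)\<^sup>2)"
    by (simp add: algebra_simps)
  moreover have "(x + 1) / (12 * (x - 1)) * ((x - 1) / (x - 2))\<^sup>2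
      = ((x + 1) * (x - 1)\<^sup>2) / (12 * (x - 1) * (x - 2)\<^sup>2)"
    by (simp add: power_divide)
  moreover have "\<dots> = (x\<^sup>2 - 1) / (12 * (x - 2)\<^sup>2)"
  proof -
    have "12 * (x - 1) * (x - 2)\<^sup>2 \<noteq> 0" "12 * (x - 2)\<^sup>2 \<noteq> 0" using x by auto
    then show ?thesis by (subst frac_eq_eq) (simp_all add: power2_eq_square algebra_simps)
  qed
  moreover have "real k / x - (real k / x)\<^sup>2 = real k * (x - real k) / x\<^sup>2"
    using x by (simp add: power2_eq_square field_simps)
  ultimately show ?thesis
    using x by (simp add: divide_le_eq le_divide_eq mult.commute mult.left_commute)
qed

lemma borda_coeff_le_sigma_scaled_approval:
  assumes "m \<ge> 5"
  shows "borda_coeff m \<le> sigma_scaled m (approval m (m div 2))"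
proof -
  have "score_variance m (borda m) * ((real m - 1) / (real m - 2))\<^sup>2
      \<le> score_variance m (approval m (m div 2))"
    using borda_variance_slope_le_half_approval_variance[OF assms refl refl] assms
    by (simp add: score_variance_borda score_variance_approval)
  then have "score_variance m (borda m) * ((real m - 1) / (real m - 2))\<^sup>2 * (real m / (real m - 1))
      \<le> score_variance m (approval m (m div 2)) * (real m / (real m - 1))"
    by (rule mult_right_mono) (use assms in simp)
  then have "(borda_coeff m)\<^sup>2 \<le> (sigma_scaled m (approval m (m div 2)))\<^sup>2"
    using assms by (simp only: borda_coeff_sq sigma_scaled_sq)
  then show ?thesis
    by (rule power2_le_imp_le) (use assms sigma_scaled_nonneg in simp)
qed

lemma dominates_borda_if_borda_coeff_le:
  assumes "m \<ge> 3" "positional_rule m w" "borda_coeff m \<le> sigma_scaled m w"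
  shows "dominates m w (borda m)"
proof -
  interpret prob_space "gauss_m m" by (rule prob_space_gauss_m)
  have "V_w m (borda m) z \<le> ereal v" if "V_w m w z \<le> ereal v" for z v
  proof -
    have "borda_coeff m * top_gap m z \<le> sigma_scaled m w * top_gap m z"
      using assms by (intro mult_right_mono top_gap_nonneg) auto
    also have "\<dots> \<le> v" using sigma_scaled_top_gap_le_V_w[OF assms(2) that] .
    finally show ?thesis using V_w_borda_le_iff[OF assms(1)] by blast
  qed
  then show ?thesis
    unfolding dominates_def g_w_def
    by (intro allI impI finite_measure_mono) (use sets_gauss_m_V_w_le assms(1) in auto)
qed

lemma not_dominates_borda_if_borda_coeff_gt:
  assumes "m \<ge> 3" "positional_rule m w" "i \<in> {1..m-1}" "0 < score_slack w i"
    and "sigma_scaled m w / score_slack w i < borda_coeff m"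
  shows "\<not> dominates m w (borda m)"
proof
  assume dom: "dominates m w (borda m)"
  interpret prob_space "gauss_m m" by (rule prob_space_gauss_m)
  define \<gamma> where "\<gamma> = score_slack w i"
  define \<kappa> where "\<kappa> = sigma_scaled m w / \<gamma>"
  define r where "r = max (1/2) (\<kappa> / borda_coeff m)"
  have kB: "0 < borda_coeff m" using borda_coeff_pos[OF assms(1)] .
  have "\<kappa> < borda_coeff m" using assms(5) by (simp only: \<kappa>_def \<gamma>_def)
  then have "\<kappa> / borda_coeff m < 1" using kB by simp
  then have r12: "1/2 \<le> r" "r < 1" by (auto simp: r_def)
  have "\<kappa> = (\<kappa> / borda_coeff m) * borda_coeff m" using kB by simp
  also have "\<dots> \<le> r * borda_coeff m" using kB by (intro mult_right_mono) (auto simp: r_def)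
  finally have r: "1/2 \<le> r" "r < 1" "\<kappa> \<le> r * borda_coeff m" using r12 by auto
  obtain s where s: "0 < s" and gain: "\<P>(z in gauss_m m. top_gap m z \<le> s)
      < \<P>(z in gauss_m m. top_gap m z \<le> s / r \<and> top_gap m z \<le> \<gamma> * top_excess m z)"
    using exists_top_gap_level_gain[OF assms(1) r(1,2)] assms(4) \<gamma>_def by blast
  define v where "v = borda_coeff m * s"
  have "g_w m (borda m) v = \<P>(z in gauss_m m. top_gap m z \<le> s)"
    unfolding g_w_def V_w_borda_le_iff[OF assms(1)] v_def using kB by simp
  also note gain
  also have "\<P>(z in gauss_m m. top_gap m z \<le> s / r \<and> top_gap m z \<le> \<gamma> * top_excess m z) \<le> g_w m w v"
    unfolding g_w_def
  proof (intro finite_measure_mono subsetI)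
    fix z assume "z \<in> {z \<in> space (gauss_m m). top_gap m z \<le> s / r \<and> top_gap m z \<le> \<gamma> * top_excess m z}"
    then have z: "z \<in> space (gauss_m m)" "top_gap m z \<le> s / r" "top_gap m z \<le> \<gamma> * top_excess m z"
      by auto
    have "V_w m w z \<le> ereal (\<kappa> * top_gap m z)"
      unfolding \<kappa>_def \<gamma>_def using assms z(3) by (intro V_w_le_on_slack_region) (auto simp: \<gamma>_def)
    also have "\<kappa> * top_gap m z \<le> (r * borda_coeff m) * (s / r)"
      using r z(2) kB assms(1) top_gap_nonneg[of m z]
      by (intro mult_mono) (auto simp: \<kappa>_def \<gamma>_def intro!: divide_nonneg_pos sigma_scaled_nonneg assms(4))
    also have "(r * borda_coeff m) * (s / r) = v" using r by (simp add: v_def)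
    finally show "z \<in> {z \<in> space (gauss_m m). V_w m w z \<le> ereal v}" using z(1) by simp
  qed (use sets_gauss_m_V_w_le assms(1) in auto)
  finally have "g_w m (borda m) v < g_w m w v" .
  moreover have "0 \<le> v" using kB s by (simp add: v_def)
  ultimately show False using dom by (auto simp: dominates_def not_le[symmetric])
qed

lemma not_dominates_borda_if_variance_lt:
  assumes "m \<ge> 3" "positional_rule m w" "i \<in> {1..m-1}"
    and "score_variance m w
      < score_variance m (borda m) * ((real m - 1) / (real m - 2))\<^sup>2 * (score_slack w i)\<^sup>2"
  shows "\<not> dominates m w (borda m)"
proof -
  have "score_slack w i \<noteq> 0"
    using assms(4) score_variance_nonneg[of m w] assms(1) by auto
  then have "0 < score_slack w i"
    using score_slack_nonneg[OF assms(2,3)] by simp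
  then show ?thesis
    using assms by (intro not_dominates_borda_if_borda_coeff_gt sigma_scaled_div_lt_borda_coeff)
qed

section \<open>Three and four candidates\<close>

lemma three_candidate_gap:
  fixes a :: real
  assumes "a \<noteq> 1/2"
  shows "\<exists>\<gamma> \<in> {a, 1 - a}. 3 * (1 + a\<^sup>2) - (1 + a)\<^sup>2 < 6 * \<gamma>\<^sup>2"
proof (cases "a > 1/2")
  case True
  then have "0 < (2 * a - 1) * (a + 1)" by (intro mult_pos_pos) auto
  then have "3 * (1 + a\<^sup>2) - (1 + a)\<^sup>2 < 6 * a\<^sup>2" by (simp add: power2_eq_square algebra_simps)
  then show ?thesis by blast
next
  case False
  with assms have "0 < (1 - 2 * a) * (2 - a)" by (intro mult_pos_pos) auto
  then have "3 * (1 + a\<^sup>2) - (1 + a)\<^sup>2 < 6 * (1 - a)\<^sup>2" by (simp add: power2_eq_square algebra_simps)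
  then show ?thesis by blast
qed

lemma pos_quadratic_comb:
  fixes u v c1 c2 c3 :: real
  assumes "0 \<le> u" "u \<le> 1" "0 \<le> v" "v \<le> 1" "0 < u \<or> 0 < v" "0 < c1" "0 < c2" "0 \<le> c3"
  shows "0 < c1 * u * (4 - u) + c2 * v * (4 - v) + c3 * u * v"
proof -
  have "0 \<le> c1 * u * (4 - u)" "0 \<le> c2 * v * (4 - v)" "0 \<le> c3 * u * v" using assms by simp_all
  moreover have "0 < c1 * u * (4 - u) \<or> 0 < c2 * v * (4 - v)" using assms by auto
  ultimately show ?thesis by linarith
qed

(* In each case u, v >= 0 measure the distance of (a, b) from the Borda point (2/3, 1/3), and
   9 times the difference of the two sides is a positive combination as in pos_quadratic_comb. *)
lemma four_candidate_gap:
  fixes a b :: real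
  assumes "0 \<le> b" "b \<le> a" "a \<le> 1" "\<not> (a = 2/3 \<and> b = 1/3)"
  shows "\<exists>\<gamma> \<in> {a, 1 + b - a, 1 - b}. 4 * (1 + a\<^sup>2 + b\<^sup>2) - (1 + a + b)\<^sup>2 < 5 * \<gamma>\<^sup>2"
proof -
  consider "1 + b - a \<le> a" "1 - b \<le> a" | "a < 1 + b - a" "1 - b \<le> 1 + b - a"
    | "a < 1 - b" "1 + b - a < 1 - b" by linarith
  then show ?thesis
  proof cases
    case 1
    define u v where "u = 2 * a - 1 - b" and "v = a + b - 1"
    have "0 < u \<or> 0 < v" using 1 assms by (auto simp: u_def v_def)
    then have "0 < 3 * u * (4 - u) + 6 * v * (4 - v) + 18 * u * v"
      using 1 assms by (intro pos_quadratic_comb) (auto simp: u_def v_def)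
    then have "4 * (1 + a\<^sup>2 + b\<^sup>2) - (1 + a + b)\<^sup>2 < 5 * a\<^sup>2"
      by (simp add: u_def v_def power2_eq_square algebra_simps)
    then show ?thesis by blast
  next
    case 2
    define u v where "u = 1 + b - 2 * a" and "v = 2 * b - a"
    have "0 < 6 * u * (4 - u) + 6 * v * (4 - v) + 24 * u * v"
      using 2 assms by (intro pos_quadratic_comb) (auto simp: u_def v_def)
    then have "4 * (1 + a\<^sup>2 + b\<^sup>2) - (1 + a + b)\<^sup>2 < 5 * (1 + b - a)\<^sup>2"
      by (simp add: u_def v_def power2_eq_square algebra_simps)
    then show ?thesis by blast
  next
    case 3
    define u v where "u = 1 - b - a" and "v = a - 2 * b"
    have "0 < 6 * u * (4 - u) + 3 * v * (4 - v) + 18 * u * v"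
      using 3 assms by (intro pos_quadratic_comb) (auto simp: u_def v_def)
    then have "4 * (1 + a\<^sup>2 + b\<^sup>2) - (1 + a + b)\<^sup>2 < 5 * (1 - b)\<^sup>2"
      by (simp add: u_def v_def power2_eq_square algebra_simps)
    then show ?thesis by blast
  qed
qed

lemma borda_variance_gap_3:
  assumes "positional_rule 3 w" "\<exists>i\<in>{1..3}. w i \<noteq> borda 3 i"
  shows "\<exists>i\<in>{1..3-1}. score_variance 3 w
    < score_variance 3 (borda 3) * ((real 3 - 1) / (real 3 - 2))\<^sup>2 * (score_slack w i)\<^sup>2"
proof -
  define a where "a = w 2"
  have w: "w 1 = 1" "w 3 = 0" using assms(1) by (simp_all add: positional_rule_def)
  have "{1..3::nat} = {1, 2, 3}" "{1..3-1::nat} = {1, 2}" by auto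
  note sets = this
  have "a \<noteq> 1/2"
  proof
    assume "a = 1/2"
    then have "\<forall>i\<in>{1..3}. w i = borda 3 i" unfolding sets using w by (auto simp: a_def borda_def)
    with assms(2) show False by blast
  qed
  then obtain \<gamma> where \<gamma>: "\<gamma> \<in> {a, 1 - a}" "3 * (1 + a\<^sup>2) - (1 + a)\<^sup>2 < 6 * \<gamma>\<^sup>2"
    using three_candidate_gap by blast
  have "score_slack w ` {1..3-1} = {a, 1 - a}"
    unfolding sets using w by (simp add: score_slack_def a_def eval_nat_numeral)
  then obtain i where i: "i \<in> {1..3-1}" "score_slack w i = \<gamma>" using \<gamma>(1) by (metis imageE)
  have var: "score_variance 3 w = (3 * (1 + a\<^sup>2) - (1 + a)\<^sup>2) / 9"
    unfolding score_variance_def wbar_def sets using w by (simp add: a_def power2_eq_square field_simps)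
  have coeff: "score_variance 3 (borda 3) * ((real 3 - 1) / (real 3 - 2))\<^sup>2 = (2 / 3 :: real)"
    by (simp add: score_variance_borda)
  have "score_variance 3 w < 2 / 3 * \<gamma>\<^sup>2" using \<gamma>(2) unfolding var by simp
  then show ?thesis unfolding coeff using i by (intro bexI[of _ i]) simp_all
qed

lemma borda_variance_gap_4:
  assumes "positional_rule 4 w" "\<exists>i\<in>{1..4}. w i \<noteq> borda 4 i"
  shows "\<exists>i\<in>{1..4-1}. score_variance 4 w
    < score_variance 4 (borda 4) * ((real 4 - 1) / (real 4 - 2))\<^sup>2 * (score_slack w i)\<^sup>2"
proof -
  define a b where "a = w 2" and "b = w 3"
  have w: "w 1 = 1" "w 4 = 0" using assms(1) by (simp_all add: positional_rule_def)
  have "{1..4::nat} = {1, 2, 3, 4}" "{1..4-1::nat} = {1, 2, 3}" by auto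
  note sets = this
  have ab: "0 \<le> b" "b \<le> a" "a \<le> 1"
    using positional_rule_bounds[OF assms(1), of 3] positional_rule_bounds[OF assms(1), of 2]
      positional_rule_antimono[OF assms(1), of 2 3] by (auto simp: a_def b_def)
  have "\<not> (a = 2/3 \<and> b = 1/3)"
  proof
    assume "a = 2/3 \<and> b = 1/3"
    then have "\<forall>i\<in>{1..4}. w i = borda 4 i"
      unfolding sets using w by (auto simp: a_def b_def borda_def)
    with assms(2) show False by blast
  qed
  then obtain \<gamma> where \<gamma>: "\<gamma> \<in> {a, 1 + b - a, 1 - b}"
    "4 * (1 + a\<^sup>2 + b\<^sup>2) - (1 + a + b)\<^sup>2 < 5 * \<gamma>\<^sup>2"
    using four_candidate_gap[OF ab] by blast
  have "score_slack w ` {1..4-1} = {a, 1 + b - a, 1 - b}"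
    unfolding sets using w by (simp add: score_slack_def a_def b_def eval_nat_numeral)
  then obtain i where i: "i \<in> {1..4-1}" "score_slack w i = \<gamma>" using \<gamma>(1) by (metis imageE)
  have var: "score_variance 4 w = (4 * (1 + a\<^sup>2 + b\<^sup>2) - (1 + a + b)\<^sup>2) / 16"
    unfolding score_variance_def wbar_def sets using w
    by (simp add: a_def b_def power2_eq_square field_simps)
  have coeff: "score_variance 4 (borda 4) * ((real 4 - 1) / (real 4 - 2))\<^sup>2 = (5 / 16 :: real)"
    by (simp add: score_variance_borda power2_eq_square)
  have "score_variance 4 w < 5 / 16 * \<gamma>\<^sup>2" using \<gamma>(2) unfolding var by simp
  then show ?thesis unfolding coeff using i by (intro bexI[of _ i]) simp_all
qed

theorem proposition14:
  fixes m :: nat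
  shows "(m \<in> {3, 4} \<longrightarrow>
           (\<nexists>w'. positional_rule m w' \<and> (\<exists>i\<in>{1..m}. w' i \<noteq> borda m i) \<and>
                  dominates m w' (borda m)))
       \<and> (m \<ge> 5 \<longrightarrow>
           positional_rule m (approval m (m div 2)) \<and>
           (\<exists>i\<in>{1..m}. approval m (m div 2) i \<noteq> borda m i) \<and>
           dominates m (approval m (m div 2)) (borda m))"
proof (intro conjI impI notI)
  assume m: "m \<in> {3, 4}"
    and "\<exists>w'. positional_rule m w' \<and> (\<exists>i\<in>{1..m}. w' i \<noteq> borda m i) \<and> dominates m w' (borda m)"
  then obtain w where w: "positional_rule m w" "\<exists>i\<in>{1..m}. w i \<noteq> borda m i"
    and dom: "dominates m w (borda m)" by blast
  have "\<exists>i\<in>{1..m-1}. score_variance m w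
      < score_variance m (borda m) * ((real m - 1) / (real m - 2))\<^sup>2 * (score_slack w i)\<^sup>2"
    using m w borda_variance_gap_3 borda_variance_gap_4 by blast
  moreover have "m \<ge> 3" using m by auto
  ultimately show False using not_dominates_borda_if_variance_lt[OF _ w(1)] dom by blast
next
  assume m: "m \<ge> 5"
  show approval: "positional_rule m (approval m (m div 2))"
    using m by (intro positional_rule_approval) auto
  have "approval m (m div 2) 2 \<noteq> borda m 2"
    using m by (auto simp: approval_def borda_def divide_eq_1_iff)
  then show "\<exists>i\<in>{1..m}. approval m (m div 2) i \<noteq> borda m i" using m by force
  show "dominates m (approval m (m div 2)) (borda m)"
    using m approval borda_coeff_le_sigma_scaled_approval
    by (intro dominates_borda_if_borda_coeff_le) auto
qed

end
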